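(* The convex set $R(\tfrac12\Delta(\mathfrak p,\mathfrak t_f))=\{\sum_{\alpha\in\Delta(\mathfrak p,\mathfrak t_f)}\tfrac{b_\alpha}{2}\alpha : 0\le b_\alpha\le 1\}$ equals the convex hull of all extremal weights of the spin module $S_G$, i.e. the convex hull of $\{w\rho_n^{(j)}: w\in W(\mathfrak k,\mathfrak t_f),\ 0\le j\le s-1\}$.
   Context: Setting: $G(\mathbb R)$ a real form of a complex connected simple group, Cartan involution $\theta$, complexified Cartan decomposition $\mathfrak g=\mathfrak k\oplus\mathfrak p$, $\mathfrak h_f=\mathfrak t_f\oplus\mathfrak a_f$ the fundamental $\theta$-stable Cartan subalgebra with $\mathfrak t_{f,0}$ maximal abelian in $\mathfrak k_0$; assume $\mathfrak k$ has no center. $\Delta(\mathfrak p,\mathfrak t_f)$ is the set of nonzero $\mathfrak t_f$-weights of $\mathfrak p$; $\Delta(\mathfrak g,\mathfrak t_f)=\Delta(\mathfrak k,\mathfrak t_f)\cup\Delta(\mathfrak p,\mathfrak t_f)$ the (possibly nonreduced) restricted root system with a positive system $\Delta^+(\mathfrak g,\mathfrak t_f)=\Delta^+(\mathfrak k,\mathfrak t_f)\cup\Delta^+(\mathfrak p,\mathfrak t_f)$, $\Delta^+(\mathfrak k,\mathfrak t_f)$ fixed. Let $C$ be the dominant chamber of $\Delta^+(\mathfrak k,\mathfrak t_f)$ and $C_{\mathfrak g}$ that of $\Delta^+(\mathfrak g,\mathfrak t_f)$ in $i\mathfrak t_{f,0}^*$; $W(\mathfrak g,\mathfrak t_f)^1=\{w\in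 W(\mathfrak g,\mathfrak t_f): w(C_{\mathfrak g})\subseteq C\}=\{w^{(0)}=e,\dots,w^{(s-1)}\}$. $\rho_n^{(j)}$ is half the sum of the roots of $w^{(j)}\Delta^+(\mathfrak p,\mathfrak t_f)$. The spin module $S_G$ of $C(\mathfrak p)$ decomposes as a $\mathfrak k$-module into copies of the irreducible modules with highest weights $\rho_n^{(j)}$, $0\le j\le s-1$. *)

theory Defs
  imports "HOL-Analysis.Analysis"
begin

text \<open>Combinatorial model of the weight data on i t_{f,0}^* (a Euclidean space,
  inner product induced by the Killing form).\<close>

definition refl :: "'a::euclidean_space \<Rightarrow> 'a \<Rightarrow> 'a" where
  "refl \<alpha> x = x - (2 * (x \<bullet> \<alpha>) / (\<alpha> \<bullet> \<alpha>)) *\<^sub>R \<alpha>"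

definition root_system :: "'a::euclidean_space set \<Rightarrow> bool" where
  "root_system D \<longleftrightarrow> finite D \<and> 0 \<notin> D \<and>
     (\<forall>\<alpha>\<in>D. refl \<alpha> ` D \<subseteq> D) \<and>
     (\<forall>\<alpha>\<in>D. \<forall>\<beta>\<in>D. 2 * (\<beta> \<bullet> \<alpha>) / (\<alpha> \<bullet> \<alpha>) \<in> \<int>)"

inductive_set weyl :: "'a::euclidean_space set \<Rightarrow> ('a \<Rightarrow> 'a) set" for D where
  weyl_id: "id \<in> weyl D"
| weyl_step: "\<alpha> \<in> D \<Longrightarrow> w \<in> weyl D \<Longrightarrow> refl \<alpha> \<circ> w \<in> weyl D"

definition positive_system :: "'a::euclidean_space set \<Rightarrow> 'a set \<Rightarrow> bool" where
  "positive_system D P \<longleftrightarrow>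
     (\<exists>l. (\<forall>\<alpha>\<in>D. l \<bullet> \<alpha> \<noteq> 0) \<and> P = {\<alpha>\<in>D. l \<bullet> \<alpha> > 0})"

definition chamber :: "'a::euclidean_space set \<Rightarrow> 'a set" where
  "chamber P = {l. \<forall>\<alpha>\<in>P. l \<bullet> \<alpha> > 0}"

definition weyl_one :: "'a::euclidean_space set \<Rightarrow> 'a set \<Rightarrow> 'a set \<Rightarrow> ('a \<Rightarrow> 'a) set" where
  "weyl_one Dg Dgplus Dkplus = {w \<in> weyl Dg. w ` chamber Dgplus \<subseteq> chamber Dkplus}"

definition rho_n :: "'a::euclidean_space set \<Rightarrow> 'a set \<Rightarrow> ('a \<Rightarrow> 'a) \<Rightarrow> 'a" where
  "rho_n Dp Dgplus w = (1/2) *\<^sub>R (\<Sum>\<beta> \<in> {\<beta>\<in>Dp. \<beta> \<in> w ` Dgplus}. \<beta>)"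

definition R_half :: "'a::euclidean_space set \<Rightarrow> 'a set" where
  "R_half Dp = {(\<Sum>\<alpha>\<in>Dp. (b \<alpha> / 2) *\<^sub>R \<alpha>) | b. \<forall>\<alpha>\<in>Dp. 0 \<le> b \<alpha> \<and> b \<alpha> \<le> 1}"

end

theory Submission
  imports Defs
begin

text \<open>The set R_half Dp is a zonotope, and its vertices are the half sums of the roots of
  Dp positive on a vector l that is regular for the whole restricted root system D: the maximum
  of a linear functional c over R_half Dp is attained at the vertex of any regular l having the
  signs of c on D, and such an l exists by perturbing c.
  Given a regular l, move it by W(k) into the dominant chamber C of Dk and then by W(g) into the
  chamber of Dgplus; the inverse w of the second move lies in W(g)^1 and the vertex of l is
  u rho_n^w with u undoing the first move. Conversely u rho_n^w is the vertex of the regular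
  vector u (w l0). Transitivity of a Weyl group on chambers comes from maximising the height
  along l0 over the finite orbit of l.\<close>

lemma refl_orthogonal_transformation:
  assumes "a \<noteq> 0"
  shows "orthogonal_transformation (refl a)"
  unfolding orthogonal_transformation_def
proof
  show "linear (refl a)"
    by (rule linearI) (simp_all add: refl_def inner_add_left algebra_simps add_divide_distrib)
  show "\<forall>x y. refl a x \<bullet> refl a y = x \<bullet> y"
    using assms by (simp add: refl_def inner_diff_left inner_diff_right field_simps inner_commute)
qed

lemma refl_refl [simp]: "a \<noteq> 0 \<Longrightarrow> refl a (refl a x) = x"
  by (simp add: refl_def inner_diff_left field_simps)

lemma refl_self: "a \<noteq> 0 \<Longrightarrow> refl a a = - a"
  by (simp add: refl_def scaleR_2)

lemma weyl_orthogonal_transformation: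
  "w \<in> weyl D \<Longrightarrow> 0 \<notin> D \<Longrightarrow> orthogonal_transformation w"
proof (induction rule: weyl.induct)
  case weyl_id
  show ?case unfolding id_def by (rule orthogonal_transformation_id)
next
  case (weyl_step a w)
  then have "a \<noteq> 0" by auto
  then show ?case
    by (rule orthogonal_transformation_compose[OF refl_orthogonal_transformation
          weyl_step.IH[OF weyl_step.prems]])
qed

lemma weyl_comp_refl: "w \<in> weyl D \<Longrightarrow> a \<in> D \<Longrightarrow> w \<circ> refl a \<in> weyl D"
proof (induction rule: weyl.induct)
  case weyl_id
  have "refl a \<circ> id \<in> weyl D" by (rule weyl.weyl_step[OF weyl_id weyl.weyl_id])
  then show ?case by simp
next
  case (weyl_step b w)
  have "refl b \<circ> (w \<circ> refl a) \<in> weyl D"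
    by (rule weyl.weyl_step[OF weyl_step(1) weyl_step.IH[OF weyl_step.prems]])
  then show ?case by (simp only: comp_assoc)
qed

lemma weyl_inverse:
  assumes "w \<in> weyl D" "0 \<notin> D"
  obtains v where "v \<in> weyl D" "\<And>x. v (w x) = x"
proof -
  have "\<exists>v\<in>weyl D. \<forall>x. v (w x) = x"
    using assms
  proof (induction rule: weyl.induct)
    case weyl_id
    show ?case by (rule bexI[OF _ weyl.weyl_id]) simp
  next
    case (weyl_step a w)
    then obtain v where v: "v \<in> weyl D" "\<forall>x. v (w x) = x" by blast
    have "a \<noteq> 0" using weyl_step.prems weyl_step.hyps(1) by blast
    then have "\<forall>x. (v \<circ> refl a) ((refl a \<circ> w) x) = x"
      using v(2) by simp
    then show ?case using weyl_comp_refl[OF v(1) weyl_step.hyps(1)] by blast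
  qed
  then show thesis using that by blast
qed

lemma root_system_zero_notin: "root_system D \<Longrightarrow> 0 \<notin> D"
  by (simp add: root_system_def)

lemma root_system_uminus:
  assumes "root_system D" "a \<in> D"
  shows "- a \<in> D"
proof -
  have "a \<noteq> 0" "refl a a \<in> D" using assms by (auto simp: root_system_def)
  then show ?thesis by (simp add: refl_self)
qed

lemma weyl_image_subset:
  "w \<in> weyl D \<Longrightarrow> \<forall>a\<in>D. refl a ` D \<subseteq> D \<Longrightarrow> w ` D \<subseteq> D"
  by (induction rule: weyl.induct) (auto simp: image_subset_iff)

lemma weyl_image_root_system:
  assumes "root_system D" "w \<in> weyl D"
  shows "w ` D = D"
proof (rule endo_inj_surj)
  show "finite D" "w ` D \<subseteq> D"
    using assms weyl_image_subset by (auto simp: root_system_def)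
  have "orthogonal_transformation w"
    using weyl_orthogonal_transformation[OF assms(2) root_system_zero_notin[OF assms(1)]] .
  then show "inj_on w D"
    using orthogonal_transformation_inj inj_on_subset by blast
qed

definition regular_vectors :: "'a::real_inner set \<Rightarrow> 'a set" where
  "regular_vectors D = {l. \<forall>a\<in>D. l \<bullet> a \<noteq> 0}"

definition positive_roots :: "'a::real_inner set \<Rightarrow> 'a \<Rightarrow> 'a set" where
  "positive_roots D l = {a\<in>D. 0 < l \<bullet> a}"

definition half_sum :: "'a::real_vector set \<Rightarrow> 'a" where
  "half_sum B = (1/2) *\<^sub>R \<Sum>B"

lemma positive_roots_mono: "D \<subseteq> E \<Longrightarrow> positive_roots D l = D \<inter> positive_roots E l"
  by (auto simp: positive_roots_def)

lemma positive_roots_orthogonal_transformation: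
  assumes "orthogonal_transformation f"
  shows "positive_roots (f ` D) (f l) = f ` positive_roots D l"
  using assms by (auto simp: positive_roots_def orthogonal_transformation_def)

lemma regular_vectors_orthogonal_transformation:
  assumes "orthogonal_transformation f" "l \<in> regular_vectors D"
  shows "f l \<in> regular_vectors (f ` D)"
  using assms by (auto simp: regular_vectors_def orthogonal_transformation_def)

lemma regular_vectors_antimono: "D \<subseteq> E \<Longrightarrow> regular_vectors E \<subseteq> regular_vectors D"
  by (auto simp: regular_vectors_def)

lemma half_sum_linear_inj:
  assumes "linear f" "inj f"
  shows "f (half_sum B) = half_sum (f ` B)"
  using assms by (simp add: half_sum_def linear_scale linear_sum sum.reindex inj_on_subset)

lemma weyl_orbit_finite:
  assumes "root_system D" "span D = UNIV"
  shows "finite ((\<lambda>w. w l) ` weyl D)"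
proof -
  define coords where "coords x = restrict (\<lambda>a. x \<bullet> a) D" for x :: 'a
  have "coords ` (\<lambda>w. w l) ` weyl D \<subseteq> (\<Pi>\<^sub>E a\<in>D. (\<lambda>b. l \<bullet> b) ` D)"
  proof clarify
    fix w assume w: "w \<in> weyl D"
    have "w l \<bullet> a \<in> (\<lambda>b. l \<bullet> b) ` D" if "a \<in> D" for a
    proof -
      obtain b where "b \<in> D" "a = w b"
        using \<open>a \<in> D\<close> weyl_image_root_system[OF assms(1) w] by blast
      moreover have "orthogonal_transformation w"
        using weyl_orthogonal_transformation[OF w root_system_zero_notin[OF assms(1)]] .
      ultimately show ?thesis by (simp add: orthogonal_transformation_def)
    qed
    then show "coords (w l) \<in> (\<Pi>\<^sub>E a\<in>D. (\<lambda>b. l \<bullet> b) ` D)"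
      by (simp add: coords_def)
  qed
  moreover have "finite (\<Pi>\<^sub>E a\<in>D. (\<lambda>b. l \<bullet> b) ` D)"
    using assms(1) by (simp add: root_system_def finite_PiE)
  moreover have "inj coords"
  proof (rule injI)
    fix x y assume xy: "coords x = coords y"
    have ortho: "(x - y) \<bullet> a = 0" if "a \<in> D" for a
      using fun_cong[OF xy, of a] that by (simp add: coords_def inner_diff_left)
    have "orthogonal (x - y) (x - y)"
      by (rule orthogonal_to_span[of _ D]) (simp_all add: orthogonal_def assms(2) ortho)
    then show "x = y" by (simp add: orthogonal_def)
  qed
  ultimately show ?thesis
    by (meson finite_imageD finite_subset inj_on_subset subset_UNIV)
qed

lemma weyl_transitive_on_chambers:
  assumes D: "root_system D" "span D = UNIV"
    and l0: "l0 \<in> regular_vectors D" and l: "l \<in> regular_vectors D"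
  obtains w where "w \<in> weyl D" "positive_roots D (w l) = positive_roots D l0"
proof -
  let ?height = "\<lambda>w. w l \<bullet> l0"
  have fin: "finite (?height ` weyl D)"
    using finite_imageI[OF weyl_orbit_finite[OF D, of l], of "\<lambda>x. x \<bullet> l0"]
    by (simp add: image_image)
  have "Max (?height ` weyl D) \<in> ?height ` weyl D"
    using fin weyl.weyl_id by (intro Max_in) auto
  then obtain w where w: "w \<in> weyl D" and "?height w = Max (?height ` weyl D)" by auto
  then have highest: "?height v \<le> ?height w" if "v \<in> weyl D" for v
    using Max_ge[OF fin imageI[OF that]] by simp
  have "0 \<notin> D" using root_system_zero_notin[OF D(1)] .
  have wl: "w l \<in> regular_vectors D"
    using regular_vectors_orthogonal_transformation[OF weyl_orthogonal_transformation[OF w \<open>0 \<notin> D\<close>] l]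
    by (simp add: weyl_image_root_system[OF D(1) w])
  have pos: "0 < w l \<bullet> a" if a: "a \<in> D" "0 < l0 \<bullet> a" for a
  proof -
    have "refl a (w l) \<bullet> l0 \<le> w l \<bullet> l0"
      using highest weyl.weyl_step[OF a(1) w] by fastforce
    moreover have "refl a (w l) \<bullet> l0 = w l \<bullet> l0 - 2 * (w l \<bullet> a) / (a \<bullet> a) * (a \<bullet> l0)"
      by (simp add: refl_def inner_diff_left)
    ultimately have "0 \<le> 2 * (w l \<bullet> a) / (a \<bullet> a) * (a \<bullet> l0)" by simp
    moreover have "0 < a \<bullet> l0" "0 < a \<bullet> a"
      using a \<open>0 \<notin> D\<close> by (auto simp: inner_commute)
    ultimately have "0 \<le> w l \<bullet> a"
      by (simp add: zero_le_mult_iff zero_le_divide_iff)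
    then show ?thesis using wl a(1) by (auto simp: regular_vectors_def)
  qed
  have "0 < w l \<bullet> a \<longleftrightarrow> 0 < l0 \<bullet> a" if "a \<in> D" for a
  proof
    assume "0 < w l \<bullet> a"
    show "0 < l0 \<bullet> a"
    proof (rule ccontr)
      assume "\<not> 0 < l0 \<bullet> a"
      then have "0 < l0 \<bullet> - a" using l0 that by (auto simp: regular_vectors_def)
      then have "0 < w l \<bullet> - a" using pos root_system_uminus[OF D(1) that] by blast
      with \<open>0 < w l \<bullet> a\<close> show False by simp
    qed
  qed (use pos that in blast)
  then have "positive_roots D (w l) = positive_roots D l0"
    by (auto simp: positive_roots_def)
  with w that show thesis by blast
qed

lemma half_sum_positive_roots_in_R_half:
  assumes "finite Dp"
  shows "half_sum (positive_roots Dp l) \<in> R_half Dp"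
proof -
  define b where "b a = (if 0 < l \<bullet> a then 1 else 0 :: real)" for a
  have "half_sum (positive_roots Dp l) = (\<Sum>a\<in>Dp. (b a / 2) *\<^sub>R a)"
    unfolding half_sum_def positive_roots_def b_def scaleR_sum_right sum.inter_filter[OF assms]
    by (rule sum.cong) auto
  moreover have "\<forall>a\<in>Dp. 0 \<le> b a \<and> b a \<le> 1" by (simp add: b_def)
  ultimately show ?thesis unfolding R_half_def by blast
qed

lemma convex_R_half: "convex (R_half Dp)"
  unfolding convex_def
proof (intro ballI allI impI)
  fix x y and u v :: real
  assume x: "x \<in> R_half Dp" and y: "y \<in> R_half Dp" and uv: "0 \<le> u" "0 \<le> v" "u + v = 1"
  obtain b where b: "x = (\<Sum>a\<in>Dp. (b a / 2) *\<^sub>R a)" "\<forall>a\<in>Dp. 0 \<le> b a \<and> b a \<le> 1"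
    using x unfolding R_half_def by auto
  obtain c where c: "y = (\<Sum>a\<in>Dp. (c a / 2) *\<^sub>R a)" "\<forall>a\<in>Dp. 0 \<le> c a \<and> c a \<le> 1"
    using y unfolding R_half_def by auto
  define d where "d a = u * b a + v * c a" for a
  have "u *\<^sub>R x + v *\<^sub>R y = (\<Sum>a\<in>Dp. (d a / 2) *\<^sub>R a)"
    unfolding b(1) c(1) d_def scaleR_sum_right sum.distrib[symmetric]
    by (rule sum.cong) (auto simp: scaleR_add_left[symmetric] add_divide_distrib)
  moreover have "0 \<le> d a \<and> d a \<le> 1" if "a \<in> Dp" for a
  proof -
    have "0 \<le> b a" "b a \<le> 1" "0 \<le> c a" "c a \<le> 1" using b c that by auto
    then have "u * b a \<le> u" "v * c a \<le> v" using uv by (auto intro: mult_left_le)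
    then show ?thesis unfolding d_def using uv \<open>0 \<le> b a\<close> \<open>0 \<le> c a\<close> by simp
  qed
  ultimately show "u *\<^sub>R x + v *\<^sub>R y \<in> R_half Dp" unfolding R_half_def by blast
qed

lemma R_half_inner_le:
  assumes "finite Dp" "p \<in> R_half Dp"
    and signs: "\<forall>a\<in>Dp. (0 < c \<bullet> a \<longrightarrow> 0 < l \<bullet> a) \<and> (c \<bullet> a < 0 \<longrightarrow> l \<bullet> a < 0)"
  shows "c \<bullet> p \<le> c \<bullet> half_sum (positive_roots Dp l)"
proof -
  obtain b where p: "p = (\<Sum>a\<in>Dp. (b a / 2) *\<^sub>R a)" and b: "\<forall>a\<in>Dp. 0 \<le> b a \<and> b a \<le> 1"
    using assms(2) unfolding R_half_def by auto
  have "c \<bullet> p = (\<Sum>a\<in>Dp. b a * (c \<bullet> a) / 2)"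
    unfolding p by (simp add: inner_sum_right)
  also have "\<dots> \<le> (\<Sum>a\<in>Dp. if 0 < l \<bullet> a then c \<bullet> a / 2 else 0)"
  proof (rule sum_mono)
    fix a assume a: "a \<in> Dp"
    show "b a * (c \<bullet> a) / 2 \<le> (if 0 < l \<bullet> a then c \<bullet> a / 2 else 0)"
    proof (cases "0 < l \<bullet> a")
      case True
      then have "0 \<le> c \<bullet> a" using signs a by force
      then show ?thesis using True b a by (simp add: mult_left_le_one_le)
    next
      case False
      then have "c \<bullet> a \<le> 0" using signs a by force
      then show ?thesis using False b a by (simp add: mult_nonneg_nonpos)
    qed
  qed
  also have "\<dots> = c \<bullet> half_sum (positive_roots Dp l)"
    unfolding half_sum_def positive_roots_def
    by (simp add: inner_sum_right sum.inter_filter[OF assms(1)] sum_divide_distrib)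
      (rule sum.cong, auto)
  finally show ?thesis .
qed

lemma exists_regular_vector_same_signs:
  assumes "finite D" "l0 \<in> regular_vectors D"
  obtains l where "l \<in> regular_vectors D"
    "\<forall>a\<in>D. (0 < c \<bullet> a \<longrightarrow> 0 < l \<bullet> a) \<and> (c \<bullet> a < 0 \<longrightarrow> l \<bullet> a < 0)"
proof -
  let ?good = "\<lambda>e a. (c + e *\<^sub>R l0) \<bullet> a \<noteq> 0 \<and>
    (0 < c \<bullet> a \<longrightarrow> 0 < (c + e *\<^sub>R l0) \<bullet> a) \<and> (c \<bullet> a < 0 \<longrightarrow> (c + e *\<^sub>R l0) \<bullet> a < 0)"
  have "eventually (\<lambda>e. ?good e a) (at_right 0)" if a: "a \<in> D" for a
  proof -
    have l0a: "l0 \<bullet> a \<noteq> 0" using assms(2) a by (simp add: regular_vectors_def)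
    have lim: "((\<lambda>e. c \<bullet> a + e * (l0 \<bullet> a)) \<longlongrightarrow> c \<bullet> a) (at_right 0)"
      by (auto intro!: tendsto_eq_intros)
    consider "c \<bullet> a = 0" | "0 < c \<bullet> a" | "c \<bullet> a < 0" by linarith
    then show ?thesis
    proof cases
      case 1
      show ?thesis using eventually_at_right_less[of 0]
        by eventually_elim (use 1 l0a in \<open>simp add: inner_add_left\<close>)
    next
      case 2
      show ?thesis using order_tendstoD(1)[OF lim 2]
        by eventually_elim (use 2 in \<open>simp add: inner_add_left\<close>)
    next
      case 3
      show ?thesis using order_tendstoD(2)[OF lim 3]
        by eventually_elim (use 3 in \<open>simp add: inner_add_left\<close>)
    qed
  qed
  then have "eventually (\<lambda>e. \<forall>a\<in>D. ?good e a) (at_right 0)"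
    using assms(1) by (simp add: eventually_ball_finite)
  then obtain e where "\<forall>a\<in>D. ?good e a"
    using eventually_happens'[OF trivial_limit_at_right_real] by blast
  then show thesis
    using that[of "c + e *\<^sub>R l0"] by (simp add: regular_vectors_def)
qed

lemma R_half_eq_convex_hull_vertices:
  assumes "finite D" "Dp \<subseteq> D" "l0 \<in> regular_vectors D"
  shows "R_half Dp = convex hull ((\<lambda>l. half_sum (positive_roots Dp l)) ` regular_vectors D)"
    (is "_ = convex hull ?V")
proof
  have "finite Dp" using assms finite_subset by blast
  show "convex hull ?V \<subseteq> R_half Dp"
    using half_sum_positive_roots_in_R_half[OF \<open>finite Dp\<close>]
    by (intro hull_minimal convex_R_half) auto
  show "R_half Dp \<subseteq> convex hull ?V"
  proof
    fix p assume p: "p \<in> R_half Dp"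
    show "p \<in> convex hull ?V"
    proof (rule ccontr)
      assume "p \<notin> convex hull ?V"
      moreover have "finite ?V"
        by (rule finite_subset[of _ "half_sum ` Pow Dp"])
          (use \<open>finite Dp\<close> in \<open>auto simp: positive_roots_def\<close>)
      ultimately obtain c b where sep: "c \<bullet> p < b" "\<forall>x\<in>convex hull ?V. b < c \<bullet> x"
        using separating_hyperplane_closed_point[OF convex_convex_hull]
          compact_imp_closed[OF finite_imp_compact_convex_hull] by blast
      \<comment> \<open>the vertex of a regular vector with the signs of -c minimises c on R_half Dp\<close>
      obtain l where l: "l \<in> regular_vectors D"
        "\<forall>a\<in>D. (0 < - c \<bullet> a \<longrightarrow> 0 < l \<bullet> a) \<and> (- c \<bullet> a < 0 \<longrightarrow> l \<bullet> a < 0)"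
        using exists_regular_vector_same_signs[OF assms(1,3)] by blast
      have "- c \<bullet> p \<le> - c \<bullet> half_sum (positive_roots Dp l)"
        using R_half_inner_le[OF \<open>finite Dp\<close> p] l(2) assms(2) by blast
      moreover have "b < c \<bullet> half_sum (positive_roots Dp l)"
        using sep(2) l(1) by (simp add: hull_inc)
      ultimately show False using sep(1) by simp
    qed
  qed
qed

lemma half_sum_positive_roots_orthogonal_transformation:
  assumes "orthogonal_transformation f" "f ` Dp = Dp"
  shows "f (half_sum (positive_roots Dp l)) = half_sum (positive_roots Dp (f l))"
proof -
  have "f (half_sum (positive_roots Dp l)) = half_sum (f ` positive_roots Dp l)"
    using half_sum_linear_inj[OF orthogonal_transformation_linear[OF assms(1)]
        orthogonal_transformation_inj[OF assms(1)]] .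
  also have "\<dots> = half_sum (positive_roots Dp (f l))"
    using positive_roots_orthogonal_transformation[OF assms(1), of Dp l] assms(2) by simp
  finally show ?thesis .
qed

lemma rho_n_eq_half_sum_positive_roots:
  assumes "root_system D" "w \<in> weyl D" "Dp \<subseteq> D" "Dgplus = positive_roots D l0"
  shows "rho_n Dp Dgplus w = half_sum (positive_roots Dp (w l0))"
proof -
  have "orthogonal_transformation w"
    using weyl_orthogonal_transformation[OF assms(2) root_system_zero_notin[OF assms(1)]] .
  then have "w ` Dgplus = positive_roots D (w l0)"
    using positive_roots_orthogonal_transformation[of w D l0] weyl_image_root_system[OF assms(1,2)]
      assms(4) by simp
  then have "{\<beta>\<in>Dp. \<beta> \<in> w ` Dgplus} = positive_roots Dp (w l0)"
    using positive_roots_mono[OF assms(3)] by auto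
  then show ?thesis by (simp add: rho_n_def half_sum_def)
qed

lemma chamber_image_subset:
  assumes "orthogonal_transformation w" "Kplus \<subseteq> w ` Gplus"
  shows "w ` chamber Gplus \<subseteq> chamber Kplus"
  using assms by (fastforce simp: chamber_def orthogonal_transformation_def)

lemma half_sum_positive_roots_eq_extremal_weight:
  assumes rsD: "root_system (Dk \<union> Dp)" and rsK: "root_system Dk" and span: "span Dk = UNIV"
    and invariant: "\<forall>u\<in>weyl Dk. u ` Dp = Dp"
    and l0: "l0 \<in> regular_vectors (Dk \<union> Dp)"
    and Dgplus: "Dgplus = positive_roots (Dk \<union> Dp) l0" and Dkplus: "Dkplus = positive_roots Dk l0"
    and l: "l \<in> regular_vectors (Dk \<union> Dp)"
  obtains u w where "u \<in> weyl Dk" "w \<in> weyl_one (Dk \<union> Dp) Dgplus Dkplus"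
    "half_sum (positive_roots Dp l) = u (rho_n Dp Dgplus w)"
proof -
  define D where "D = Dk \<union> Dp"
  note rsD = rsD[folded D_def] and l0 = l0[folded D_def] and l = l[folded D_def]
  have spanD: "span D = UNIV" using span span_mono[of Dk D] by (auto simp: D_def)
  have "l0 \<in> regular_vectors Dk" "l \<in> regular_vectors Dk"
    using l0 l regular_vectors_antimono[of Dk D] by (auto simp: D_def)
  then obtain u' where u': "u' \<in> weyl Dk" "positive_roots Dk (u' l) = positive_roots Dk l0"
    using weyl_transitive_on_chambers[OF rsK span] by blast
  obtain u where u: "u \<in> weyl Dk" "\<And>x. u (u' x) = x"
    using weyl_inverse[OF u'(1) root_system_zero_notin[OF rsK]] by metis
  have u'_orth: "orthogonal_transformation u'"
    using weyl_orthogonal_transformation[OF u'(1) root_system_zero_notin[OF rsK]] .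
  have u'_Dp: "u' ` Dp = Dp" using bspec[OF invariant u'(1)] .
  have "u' ` D = D"
    using weyl_image_root_system[OF rsK u'(1)] u'_Dp by (simp add: D_def image_Un)
  then have "u' l \<in> regular_vectors D"
    using regular_vectors_orthogonal_transformation[OF u'_orth l] by simp
  then obtain w where w: "w \<in> weyl D" "positive_roots D (w l0) = positive_roots D (u' l)"
    using weyl_transitive_on_chambers[OF rsD spanD] l0 by blast
  have w_orth: "orthogonal_transformation w"
    using weyl_orthogonal_transformation[OF w(1) root_system_zero_notin[OF rsD]] .
  have "Dkplus \<subseteq> positive_roots D (u' l)"
    using Dkplus u'(2) positive_roots_mono[of Dk D] by (auto simp: D_def)
  also have "\<dots> = w ` Dgplus"
    using w(2) Dgplus positive_roots_orthogonal_transformation[OF w_orth, of D l0]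
      weyl_image_root_system[OF rsD w(1)] by (simp add: D_def)
  finally have "w \<in> weyl_one (Dk \<union> Dp) Dgplus Dkplus"
    using w(1) chamber_image_subset[OF w_orth] by (simp add: weyl_one_def D_def)
  moreover have "half_sum (positive_roots Dp l) = u (rho_n Dp Dgplus w)"
  proof -
    have "positive_roots Dp (w l0) = positive_roots Dp (u' l)"
      using w(2) positive_roots_mono[of Dp D] by (simp add: D_def)
    then have "rho_n Dp Dgplus w = u' (half_sum (positive_roots Dp l))"
      using rho_n_eq_half_sum_positive_roots[OF rsD w(1) _ Dgplus[folded D_def]]
        half_sum_positive_roots_orthogonal_transformation[OF u'_orth u'_Dp]
      by (simp add: D_def)
    then show ?thesis using u(2) by simp
  qed
  ultimately show thesis using that u(1) by blast
qed

theorem lemma5p1: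
  fixes Dk Dp Dkplus Dgplus :: "'a::euclidean_space set"
  assumes "root_system (Dk \<union> Dp)"
    and "root_system Dk"
    and "span Dk = UNIV"
    and "finite Dp" and "0 \<notin> Dp"
    and "uminus ` Dp = Dp"
    and "\<forall>u\<in>weyl Dk. u ` Dp = Dp"
    and "positive_system (Dk \<union> Dp) Dgplus"
    and "Dkplus = Dk \<inter> Dgplus"
  shows "R_half Dp =
     convex hull {u (rho_n Dp Dgplus w) | u w. u \<in> weyl Dk \<and> w \<in> weyl_one (Dk \<union> Dp) Dgplus Dkplus}"
    (is "_ = convex hull ?S")
proof -
  obtain l0 where l0: "l0 \<in> regular_vectors (Dk \<union> Dp)"
    and Dgplus: "Dgplus = positive_roots (Dk \<union> Dp) l0"
    using assms(8) by (auto simp: positive_system_def regular_vectors_def positive_roots_def)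
  have Dkplus: "Dkplus = positive_roots Dk l0"
    using assms(9) Dgplus positive_roots_mono[of Dk "Dk \<union> Dp"] by auto
  let ?V = "(\<lambda>l. half_sum (positive_roots Dp l)) ` regular_vectors (Dk \<union> Dp)"
  have R_half: "R_half Dp = convex hull ?V"
    using R_half_eq_convex_hull_vertices[OF _ _ l0] assms(1) by (simp add: root_system_def)
  have "?V \<subseteq> ?S"
    using half_sum_positive_roots_eq_extremal_weight[OF assms(1-3,7) l0 Dgplus Dkplus] by blast
  moreover have "?S \<subseteq> R_half Dp"
  proof clarify
    fix u w assume u: "u \<in> weyl Dk" and "w \<in> weyl_one (Dk \<union> Dp) Dgplus Dkplus"
    then have "rho_n Dp Dgplus w = half_sum (positive_roots Dp (w l0))"
      using rho_n_eq_half_sum_positive_roots[OF assms(1) _ _ Dgplus] by (simp add: weyl_one_def)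
    moreover have "orthogonal_transformation u" "u ` Dp = Dp"
      using weyl_orthogonal_transformation[OF u root_system_zero_notin[OF assms(2)]] assms(7) u
      by auto
    ultimately have "u (rho_n Dp Dgplus w) = half_sum (positive_roots Dp (u (w l0)))"
      using half_sum_positive_roots_orthogonal_transformation by simp
    then show "u (rho_n Dp Dgplus w) \<in> R_half Dp"
      using half_sum_positive_roots_in_R_half[OF assms(4)] by simp
  qed
  ultimately show ?thesis
    using R_half hull_mono[of ?V ?S convex] hull_minimal[of ?S "R_half Dp" convex] convex_R_half
    by blast
qed

end
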